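(* Let $\epsilon>0$, $n\ge1$, $s=\sqrt{e^\epsilon}$, let $\mathbf{w}\in\mathbb{R}^d$ be non-increasing, $c\in\mathbb{R}$, and $\mathbf{m}$ with $m_j\ge0$, $\sum_jm_j=1$. Let $J=\{j: m_j>0\}$ and for $j\in J$ put $K_j=\frac{w_j-c}{m_j}$, $t_j=\big|\frac{s}{s-1}K_j+c\big|$, $f_j=\big|\frac{-1}{s-1}K_j+c\big|$, and for $b\in\{0,1\}$, $g_{j,b}=\frac{bs-(1-b)}{s-1}K_j$. For the weighted sampling mechanism with parameters $(\epsilon,\mathbf{w},\mathbf{m},c)$: $$\mathrm{risk}_{\mathrm{MM}}=\frac dn\max_{j\in J}\max(f_j,t_j),\qquad \mathrm{risk}_{\mathrm{EM}}=\frac{\sum_{j\in J}m_j\big[(s+d-1)t_j+(s(d-1)+1)f_j\big]}{n(s+1)}\ \text{(for every input vote)},$$ $$\mathrm{risk}_{\mathrm{DD}}=d\Big(\max_{j\in J,\,b\in\{0,1\}}g_{j,b}-\min_{j\in J,\,b\in\{0,1\}}g_{j,b}\Big).$$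
   Context: Candidates are $A_1,\dots,A_d$; a vote $\pi$ is a linear ordering, $\pi_j$ the index of the candidate at rank $j$; the scored vote is $v$ with $v_{\pi_j}=w_j$. The weighted sampling mechanism on input $\pi$: (1) samples a rank $j^*$ with $\Pr[j^*=j]=m_j$, independently of $\pi$; (2) sets $B\in\{0,1\}^d$ with $B_{\pi_{j^*}}=1$, other entries $0$; (3) independently for each $k$, sets $\tilde B_k=1-B_k$ with probability $\frac1{s+1}$, else $\tilde B_k=B_k$; (4) outputs $\tilde v_k=\frac{(s+1)\tilde B_k-1}{s-1}\cdot\frac{w_{j^*}-c}{m_{j^*}}+c$. Let $\mathcal{D}_{\tilde v}$ be the set of all possible outputs (over all inputs and all randomness), $n$ the number of voters. Risk metrics: $\mathrm{risk}_{\mathrm{MM}}=\max_{\tilde v\in\mathcal{D}_{\tilde v}}\frac{|\tilde v|_1}{n}$; $\mathrm{risk}_{\mathrm{EM}}=\mathbb{E}[\frac{|\tilde v|_1}{n}]$ over the mechanism's randomness for a given input; $\mathrm{risk}_{\mathrm{DD}}=\max_{\tilde v,\tilde v'\in\mathcal{D}_{\tilde v}}|\tilde v-\tilde v'|_1$. *)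

theory Defs
  imports "HOL-Probability.Probability"
begin

text \<open>Candidates are indexed 0..d-1, ranks are 0..d-1 (rank 0 = top).
  A vote is a bijection pi of {..<d}; pi j is the candidate at rank j.
  Score vectors / outputs are functions nat => real; only coordinates k < d matter
  (outputs are set to 0 outside {..<d}).\<close>

definition l1 :: "nat \<Rightarrow> (nat \<Rightarrow> real) \<Rightarrow> real" where
  "l1 d v = (\<Sum>k<d. \<bar>v k\<bar>)"

definition is_vote :: "nat \<Rightarrow> (nat \<Rightarrow> nat) \<Rightarrow> bool" where
  "is_vote d \<pi> \<longleftrightarrow> bij_betw \<pi> {..<d} {..<d}"

definition ws_mech ::
  "real \<Rightarrow> nat \<Rightarrow> (nat \<Rightarrow> real) \<Rightarrow> (nat \<Rightarrow> real) \<Rightarrow> real \<Rightarrow> (nat \<Rightarrow> nat) \<Rightarrow> (nat \<Rightarrow> real) pmf" where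
  "ws_mech \<epsilon> d w m c \<pi> =
     (let s = sqrt (exp \<epsilon>) in
      do {
        j \<leftarrow> embed_pmf (\<lambda>j. if j < d then m j else 0);
        flip \<leftarrow> Pi_pmf {..<d} False (\<lambda>_. bernoulli_pmf (1 / (s + 1)));
        let B = (\<lambda>k. k = \<pi> j);
        let Bt = (\<lambda>k. if flip k then \<not> B k else B k);
        return_pmf (\<lambda>k. if k < d then
             ((s + 1) * (if Bt k then 1 else 0) - 1) / (s - 1) * ((w j - c) / m j) + c
           else 0)
      })"

definition ws_outputs ::
  "real \<Rightarrow> nat \<Rightarrow> (nat \<Rightarrow> real) \<Rightarrow> (nat \<Rightarrow> real) \<Rightarrow> real \<Rightarrow> (nat \<Rightarrow> real) set" where
  "ws_outputs \<epsilon> d w m c = (\<Union>\<pi>\<in>{\<pi>. is_vote d \<pi>}. set_pmf (ws_mech \<epsilon> d w m c \<pi>))"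

definition risk_MM ::
  "real \<Rightarrow> nat \<Rightarrow> nat \<Rightarrow> (nat \<Rightarrow> real) \<Rightarrow> (nat \<Rightarrow> real) \<Rightarrow> real \<Rightarrow> real" where
  "risk_MM \<epsilon> n d w m c = Max ((\<lambda>v. l1 d v / real n) ` ws_outputs \<epsilon> d w m c)"

definition risk_EM ::
  "real \<Rightarrow> nat \<Rightarrow> nat \<Rightarrow> (nat \<Rightarrow> real) \<Rightarrow> (nat \<Rightarrow> real) \<Rightarrow> real \<Rightarrow> (nat \<Rightarrow> nat) \<Rightarrow> real" where
  "risk_EM \<epsilon> n d w m c \<pi> = measure_pmf.expectation (ws_mech \<epsilon> d w m c \<pi>) (\<lambda>v. l1 d v / real n)"

definition risk_DD ::
  "real \<Rightarrow> nat \<Rightarrow> (nat \<Rightarrow> real) \<Rightarrow> (nat \<Rightarrow> real) \<Rightarrow> real \<Rightarrow> real" where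
  "risk_DD \<epsilon> d w m c =
     Max ((\<lambda>(v, v'). l1 d (\<lambda>k. v k - v' k)) ` (ws_outputs \<epsilon> d w m c \<times> ws_outputs \<epsilon> d w m c))"

end

theory Submission
  imports Defs
begin

(* An output of the mechanism is determined by the sampled rank j, which has m j > 0, and by the
  bit pattern after flipping: coordinate k < d equals ws_value s w m c j b, where b is the bit at k.
  Every bit pattern has positive probability, so the outputs are exactly these pattern vectors,
  and the maximal l1 norm and the l1 diameter are attained coordinatewise by constant patterns.
  For the expectation, given j, the coordinate pi j shows True unless it is flipped (probability
  1/(s+1)) and each of the other d - 1 coordinates shows True only when it is flipped; linearity
  of expectation gives a value that does not depend on the vote. *)

definition flip_pmf :: "nat \<Rightarrow> real \<Rightarrow> (nat \<Rightarrow> bool) pmf" where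
  "flip_pmf d p = Pi_pmf {..<d} False (\<lambda>_. bernoulli_pmf p)"

lemma finite_set_pmf_flip_pmf: "finite (set_pmf (flip_pmf d p))"
  unfolding flip_pmf_def
  by (rule finite_subset[OF set_Pi_pmf_subset']) (auto intro!: finite_PiE_dflt)

lemma set_pmf_flip_pmf:
  assumes "0 < p" "p < 1"
  shows "set_pmf (flip_pmf d p) = {fl. \<forall>k\<ge>d. \<not> fl k}"
  using assms unfolding flip_pmf_def by (subst set_Pi_pmf) (auto simp: PiE_dflt_def not_less)

lemma expectation_flip_pmf_component:
  fixes h :: "bool \<Rightarrow> real"
  assumes "0 \<le> p" "p \<le> 1" "k < d"
  shows "measure_pmf.expectation (flip_pmf d p) (\<lambda>fl. h (fl k)) = p * h True + (1 - p) * h False"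
proof -
  have "map_pmf (\<lambda>fl. fl k) (flip_pmf d p) = bernoulli_pmf p"
    unfolding flip_pmf_def using assms by (subst Pi_pmf_component) auto
  then have "measure_pmf.expectation (flip_pmf d p) (\<lambda>fl. h (fl k)) =
      measure_pmf.expectation (bernoulli_pmf p) h"
    by (metis integral_map_pmf)
  then show ?thesis using assms by simp
qed

definition rank_pmf :: "nat \<Rightarrow> (nat \<Rightarrow> real) \<Rightarrow> nat pmf" where
  "rank_pmf d m = embed_pmf (\<lambda>j. if j < d then m j else 0)"

lemma pmf_rank_pmf:
  assumes "\<And>j. j < d \<Longrightarrow> 0 \<le> m j" "(\<Sum>j<d. m j) = 1"
  shows "pmf (rank_pmf d m) j = (if j < d then m j else 0)"
proof -
  have "(\<integral>\<^sup>+j. ennreal (if j < d then m j else 0) \<partial>count_space UNIV) =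
      (\<Sum>j<d. ennreal (if j < d then m j else 0))"
    by (rule nn_integral_count_space'[of "{..<d}"]) auto
  also have "\<dots> = 1"
    using assms by (subst sum_ennreal) auto
  finally show ?thesis
    unfolding rank_pmf_def using assms(1) by (subst pmf_embed_pmf) auto
qed

lemma set_pmf_rank_pmf:
  assumes "\<And>j. j < d \<Longrightarrow> 0 \<le> m j" "(\<Sum>j<d. m j) = 1"
  shows "set_pmf (rank_pmf d m) = {j. j < d \<and> 0 < m j}"
  using assms by (auto simp: set_pmf_eq pmf_rank_pmf order_less_le)

lemma weights_support_nonempty:
  fixes d :: nat and m :: "nat \<Rightarrow> real"
  assumes "\<And>j. j < d \<Longrightarrow> 0 \<le> m j" "(\<Sum>j<d. m j) = 1"
  shows "{j. j < d \<and> 0 < m j} \<noteq> {}"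
  using set_pmf_not_empty[of "rank_pmf d m"] set_pmf_rank_pmf[OF assms] by simp

definition pattern_vector :: "nat \<Rightarrow> (bool \<Rightarrow> real) \<Rightarrow> (nat \<Rightarrow> bool) \<Rightarrow> nat \<Rightarrow> real" where
  "pattern_vector d v P k = (if k < d then v (P k) else 0)"

definition pattern_vectors :: "nat \<Rightarrow> ('j \<Rightarrow> bool \<Rightarrow> real) \<Rightarrow> 'j set \<Rightarrow> (nat \<Rightarrow> real) set" where
  "pattern_vectors d V J = {pattern_vector d (V j) P | j P. j \<in> J}"

lemma l1_pattern_vector: "l1 d (pattern_vector d v P) = (\<Sum>k<d. \<bar>v (P k)\<bar>)"
  by (simp add: l1_def pattern_vector_def)

lemma finite_pattern_vectors:
  assumes "finite J"
  shows "finite (pattern_vectors d V J)"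
proof (rule finite_subset)
  show "pattern_vectors d V J \<subseteq> (\<lambda>(j, S). pattern_vector d (V j) (\<lambda>k. k \<in> S)) ` (J \<times> Pow {..<d})"
  proof
    fix x assume "x \<in> pattern_vectors d V J"
    then obtain j P where "j \<in> J" "x = pattern_vector d (V j) P"
      unfolding pattern_vectors_def by blast
    then have "x = pattern_vector d (V j) (\<lambda>k. k \<in> {k. k < d \<and> P k})"
      "(j, {k. k < d \<and> P k}) \<in> J \<times> Pow {..<d}"
      by (auto simp: pattern_vector_def fun_eq_iff)
    then show "x \<in> (\<lambda>(j, S). pattern_vector d (V j) (\<lambda>k. k \<in> S)) ` (J \<times> Pow {..<d})"
      by force
  qed
qed (use assms in auto)

lemma Max_l1_pattern_vectors:
  assumes "finite J" "J \<noteq> {}"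
  shows "Max (l1 d ` pattern_vectors d V J) = real d * (MAX j\<in>J. max \<bar>V j False\<bar> \<bar>V j True\<bar>)"
    (is "_ = real d * ?M")
proof (rule Max_eqI)
  show "finite (l1 d ` pattern_vectors d V J)"
    using finite_pattern_vectors[OF assms(1)] by simp
next
  fix y assume "y \<in> l1 d ` pattern_vectors d V J"
  then obtain j P where j: "j \<in> J" and y: "y = (\<Sum>k<d. \<bar>V j (P k)\<bar>)"
    unfolding pattern_vectors_def by (auto simp: l1_pattern_vector)
  have "\<bar>V j (P k)\<bar> \<le> ?M" for k
  proof -
    have "\<bar>V j (P k)\<bar> \<le> max \<bar>V j False\<bar> \<bar>V j True\<bar>" by (cases "P k") auto
    also have "\<dots> \<le> ?M" using assms j by (intro Max_ge) auto
    finally show ?thesis .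
  qed
  then show "y \<le> real d * ?M"
    unfolding y using sum_bounded_above[of "{..<d}" "\<lambda>k. \<bar>V j (P k)\<bar>" ?M] by simp
next
  have "?M \<in> (\<lambda>j. max \<bar>V j False\<bar> \<bar>V j True\<bar>) ` J"
    using assms by (intro Max_in) auto
  then obtain j where j: "j \<in> J" "?M = max \<bar>V j False\<bar> \<bar>V j True\<bar>"
    by blast
  obtain b where b: "\<bar>V j b\<bar> = ?M"
    using j(2) by (metis max_def)
  have "l1 d (pattern_vector d (V j) (\<lambda>_. b)) = real d * ?M"
    by (simp add: l1_pattern_vector b)
  moreover have "pattern_vector d (V j) (\<lambda>_. b) \<in> pattern_vectors d V J"
    unfolding pattern_vectors_def using j by blast
  ultimately show "real d * ?M \<in> l1 d ` pattern_vectors d V J"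
    by (metis image_eqI)
qed

lemma Max_l1_dist_pattern_vectors:
  assumes "finite J" "J \<noteq> {}"
  shows "Max ((\<lambda>(x, y). l1 d (\<lambda>k. x k - y k)) ` (pattern_vectors d V J \<times> pattern_vectors d V J)) =
    real d * (Max (case_prod V ` (J \<times> UNIV)) - Min (case_prod V ` (J \<times> UNIV)))"
    (is "Max (?dist ` _) = real d * (?Max - ?Min)")
proof (rule Max_eqI)
  have fin: "finite (case_prod V ` (J \<times> UNIV))" using assms(1) by simp
  show "finite (?dist ` (pattern_vectors d V J \<times> pattern_vectors d V J))"
    using finite_pattern_vectors[OF assms(1)] by simp
  fix z assume "z \<in> ?dist ` (pattern_vectors d V J \<times> pattern_vectors d V J)"
  then obtain j P j' P' where j: "j \<in> J" "j' \<in> J"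
    and z: "z = (\<Sum>k<d. \<bar>V j (P k) - V j' (P' k)\<bar>)"
    unfolding pattern_vectors_def by (auto simp: l1_def pattern_vector_def)
  have "\<bar>V j (P k) - V j' (P' k)\<bar> \<le> ?Max - ?Min" for k
  proof -
    have "V j (P k) \<in> case_prod V ` (J \<times> UNIV)" "V j' (P' k) \<in> case_prod V ` (J \<times> UNIV)"
      using j by force+
    then have "V j (P k) \<le> ?Max" "V j' (P' k) \<le> ?Max" "?Min \<le> V j (P k)" "?Min \<le> V j' (P' k)"
      using Max_ge[OF fin] Min_le[OF fin] by blast+
    then show ?thesis by (simp add: abs_le_iff)
  qed
  then show "z \<le> real d * (?Max - ?Min)"
    unfolding z using sum_bounded_above[of "{..<d}" _ "?Max - ?Min"] by simp
next
  have ne: "case_prod V ` (J \<times> UNIV) \<noteq> {}" and fin: "finite (case_prod V ` (J \<times> UNIV))"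
    using assms by auto
  obtain j b where j: "j \<in> J" "V j b = ?Max"
    using Max_in[OF fin ne] by auto
  obtain j' b' where j': "j' \<in> J" "V j' b' = ?Min"
    using Min_in[OF fin ne] by auto
  have "V j' b' \<in> case_prod V ` (J \<times> UNIV)"
    using j'(1) by force
  then have "?Min \<le> ?Max"
    using fin j'(2) by (metis Max_ge)
  then have "?dist (pattern_vector d (V j) (\<lambda>_. b), pattern_vector d (V j') (\<lambda>_. b')) = real d * (?Max - ?Min)"
    by (simp add: l1_def pattern_vector_def j j')
  moreover have "pattern_vector d (V j) (\<lambda>_. b) \<in> pattern_vectors d V J"
    "pattern_vector d (V j') (\<lambda>_. b') \<in> pattern_vectors d V J"
    unfolding pattern_vectors_def using j j' by blast+
  ultimately show "real d * (?Max - ?Min) \<in> ?dist ` (pattern_vectors d V J \<times> pattern_vectors d V J)"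
    by (intro image_eqI[where x = "(pattern_vector d (V j) (\<lambda>_. b), pattern_vector d (V j') (\<lambda>_. b'))"])
      auto
qed

lemma expectation_l1_flipped_pattern_vector:
  assumes p: "0 \<le> p" "p \<le> 1" and i: "i < d"
  shows "measure_pmf.expectation (flip_pmf d p) (\<lambda>fl. l1 d (pattern_vector d v (\<lambda>k. fl k \<noteq> (k = i)))) =
    p * \<bar>v False\<bar> + (1 - p) * \<bar>v True\<bar> + (real d - 1) * (p * \<bar>v True\<bar> + (1 - p) * \<bar>v False\<bar>)"
proof -
  have "measure_pmf.expectation (flip_pmf d p) (\<lambda>fl. l1 d (pattern_vector d v (\<lambda>k. fl k \<noteq> (k = i)))) =
      (\<Sum>k<d. measure_pmf.expectation (flip_pmf d p) (\<lambda>fl. \<bar>v (fl k \<noteq> (k = i))\<bar>))"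
    unfolding l1_pattern_vector
    by (rule Bochner_Integration.integral_sum)
      (auto intro: integrable_measure_pmf_finite[OF finite_set_pmf_flip_pmf])
  also have "\<dots> = (\<Sum>k<d. p * \<bar>v (k \<noteq> i)\<bar> + (1 - p) * \<bar>v (k = i)\<bar>)"
    using expectation_flip_pmf_component[OF p, where h = "\<lambda>b. \<bar>v (b \<noteq> (_ = i))\<bar>"] by simp
  also have "\<dots> = (p * \<bar>v False\<bar> + (1 - p) * \<bar>v True\<bar>) +
      (\<Sum>k\<in>{..<d} - {i}. p * \<bar>v True\<bar> + (1 - p) * \<bar>v False\<bar>)"
    using i by (subst sum.remove[of _ i]) auto
  finally show ?thesis
    using i by (simp add: of_nat_diff)
qed

definition ws_value :: "real \<Rightarrow> (nat \<Rightarrow> real) \<Rightarrow> (nat \<Rightarrow> real) \<Rightarrow> real \<Rightarrow> nat \<Rightarrow> bool \<Rightarrow> real" where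
  "ws_value s w m c j b = ((s + 1) * (if b then 1 else 0) - 1) / (s - 1) * ((w j - c) / m j) + c"

lemma ws_mech_eq_bind:
  "ws_mech \<epsilon> d w m c \<pi> = rank_pmf d m \<bind> (\<lambda>j. map_pmf
     (\<lambda>fl. pattern_vector d (ws_value (sqrt (exp \<epsilon>)) w m c j) (\<lambda>k. fl k \<noteq> (k = \<pi> j)))
     (flip_pmf d (1 / (sqrt (exp \<epsilon>) + 1))))"
  unfolding ws_mech_def rank_pmf_def flip_pmf_def map_pmf_def Let_def
  by (intro bind_pmf_cong refl arg_cong[where f = return_pmf])
    (auto simp: pattern_vector_def ws_value_def fun_eq_iff)

lemma ws_outputs_eq:
  assumes "\<And>j. j < d \<Longrightarrow> 0 \<le> m j" "(\<Sum>j<d. m j) = 1"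
  shows "ws_outputs \<epsilon> d w m c =
    pattern_vectors d (ws_value (sqrt (exp \<epsilon>)) w m c) {j. j < d \<and> 0 < m j}"
proof
  show "ws_outputs \<epsilon> d w m c \<subseteq> pattern_vectors d (ws_value (sqrt (exp \<epsilon>)) w m c) {j. j < d \<and> 0 < m j}"
    unfolding ws_outputs_def ws_mech_eq_bind pattern_vectors_def
    by (auto simp: set_pmf_rank_pmf[OF assms])
next
  show "pattern_vectors d (ws_value (sqrt (exp \<epsilon>)) w m c) {j. j < d \<and> 0 < m j} \<subseteq> ws_outputs \<epsilon> d w m c"
  proof
    fix x assume "x \<in> pattern_vectors d (ws_value (sqrt (exp \<epsilon>)) w m c) {j. j < d \<and> 0 < m j}"
    then obtain j P where j: "j < d" "0 < m j"
      and x: "x = pattern_vector d (ws_value (sqrt (exp \<epsilon>)) w m c j) P"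
      unfolding pattern_vectors_def by blast
    define fl where "fl k \<longleftrightarrow> k < d \<and> P k \<noteq> (k = j)" for k
    obtain s where s: "s = sqrt (exp \<epsilon>)" and s_pos: "0 < s"
      by simp
    have "0 < 1 / (s + 1)" "1 / (s + 1) < 1"
      using s_pos by (simp_all add: divide_less_eq)
    then have "fl \<in> set_pmf (flip_pmf d (1 / (sqrt (exp \<epsilon>) + 1)))"
      unfolding s by (subst set_pmf_flip_pmf) (auto simp: fl_def)
    moreover have "x = pattern_vector d (ws_value (sqrt (exp \<epsilon>)) w m c j) (\<lambda>k. fl k \<noteq> (k = id j))"
    proof -
      have "\<forall>k<d. P k = (fl k \<noteq> (k = id j))"
        by (auto simp: fl_def)
      then show ?thesis
        unfolding x pattern_vector_def by auto
    qed
    ultimately have "x \<in> set_pmf (ws_mech \<epsilon> d w m c id)"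
      unfolding ws_mech_eq_bind using j by (auto simp: set_pmf_rank_pmf[OF assms])
    moreover have "is_vote d id"
      by (simp add: is_vote_def)
    ultimately show "x \<in> ws_outputs \<epsilon> d w m c"
      unfolding ws_outputs_def by blast
  qed
qed

lemma risk_MM_ws_mech:
  assumes "\<And>j. j < d \<Longrightarrow> 0 \<le> m j" "(\<Sum>j<d. m j) = 1" and "s = sqrt (exp \<epsilon>)"
  shows "risk_MM \<epsilon> n d w m c = real d / real n *
    (MAX j\<in>{j. j < d \<and> 0 < m j}. max \<bar>ws_value s w m c j False\<bar> \<bar>ws_value s w m c j True\<bar>)"
proof -
  let ?V = "pattern_vectors d (ws_value s w m c) {j. j < d \<and> 0 < m j}"
  have "ws_outputs \<epsilon> d w m c = ?V"
    unfolding assms(3) by (rule ws_outputs_eq[OF assms(1,2)])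
  then have "risk_MM \<epsilon> n d w m c = Max ((\<lambda>x. x / real n) ` l1 d ` ?V)"
    unfolding risk_MM_def image_image by simp
  also have "\<dots> = Max (l1 d ` ?V) / real n"
    using finite_pattern_vectors[of "{j. j < d \<and> 0 < m j}"] weights_support_nonempty[OF assms(1,2)]
    by (subst mono_Max_commute[symmetric]) (auto simp: pattern_vectors_def mono_def divide_right_mono)
  finally show ?thesis
    using weights_support_nonempty[OF assms(1,2)] by (simp add: Max_l1_pattern_vectors)
qed

lemma risk_DD_ws_mech:
  assumes "\<And>j. j < d \<Longrightarrow> 0 \<le> m j" "(\<Sum>j<d. m j) = 1" and "s = sqrt (exp \<epsilon>)"
  shows "risk_DD \<epsilon> d w m c = real d *
    (Max (case_prod (ws_value s w m c) ` ({j. j < d \<and> 0 < m j} \<times> UNIV)) -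
     Min (case_prod (ws_value s w m c) ` ({j. j < d \<and> 0 < m j} \<times> UNIV)))"
proof -
  have "ws_outputs \<epsilon> d w m c = pattern_vectors d (ws_value s w m c) {j. j < d \<and> 0 < m j}"
    unfolding assms(3) by (rule ws_outputs_eq[OF assms(1,2)])
  then show ?thesis
    unfolding risk_DD_def
    using weights_support_nonempty[OF assms(1,2)] by (simp add: Max_l1_dist_pattern_vectors)
qed

lemma risk_EM_ws_mech:
  assumes "\<And>j. j < d \<Longrightarrow> 0 \<le> m j" "(\<Sum>j<d. m j) = 1" and s: "s = sqrt (exp \<epsilon>)"
    and "is_vote d \<pi>"
  shows "risk_EM \<epsilon> n d w m c \<pi> =
    (\<Sum>j\<in>{j. j < d \<and> 0 < m j}. m j * ((s + real d - 1) * \<bar>ws_value s w m c j True\<bar> +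
        (s * (real d - 1) + 1) * \<bar>ws_value s w m c j False\<bar>)) / (real n * (s + 1))"
proof -
  let ?J = "{j. j < d \<and> 0 < m j}" and ?p = "1 / (s + 1)"
    and ?T = "\<lambda>j. \<bar>ws_value s w m c j True\<bar>" and ?F = "\<lambda>j. \<bar>ws_value s w m c j False\<bar>"
  define E where "E j = measure_pmf.expectation (flip_pmf d ?p)
    (\<lambda>fl. l1 d (pattern_vector d (ws_value s w m c j) (\<lambda>k. fl k \<noteq> (k = \<pi> j))) / real n)" for j
  have s_pos: "0 < s" using s by simp
  have "risk_EM \<epsilon> n d w m c \<pi> = (\<Sum>j\<in>?J. pmf (rank_pmf d m) j *\<^sub>R E j)"
    unfolding risk_EM_def ws_mech_eq_bind s[symmetric] E_def
    by (subst pmf_expectation_bind[of ?J])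
      (auto simp: set_pmf_rank_pmf[OF assms(1,2)] finite_set_pmf_flip_pmf)
  also have "\<dots> = (\<Sum>j\<in>?J. m j * (((s + real d - 1) * ?T j + (s * (real d - 1) + 1) * ?F j) /
      (real n * (s + 1))))"
  proof (intro sum.cong refl)
    fix j assume j: "j \<in> ?J"
    then have "\<pi> j < d"
      using assms(4) by (auto simp: is_vote_def dest: bij_betw_apply)
    have "E j = measure_pmf.expectation (flip_pmf d ?p)
        (\<lambda>fl. l1 d (pattern_vector d (ws_value s w m c j) (\<lambda>k. fl k \<noteq> (k = \<pi> j)))) / real n"
      unfolding E_def by (rule integral_divide_zero)
    also have "\<dots> = (?p * ?F j + (1 - ?p) * ?T j + (real d - 1) * (?p * ?T j + (1 - ?p) * ?F j)) / real n"
      using s_pos \<open>\<pi> j < d\<close> by (subst expectation_l1_flipped_pattern_vector) auto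
    also have "?p * ?F j + (1 - ?p) * ?T j + (real d - 1) * (?p * ?T j + (1 - ?p) * ?F j) =
        ((s + real d - 1) * ?T j + (s * (real d - 1) + 1) * ?F j) / (s + 1)"
      using s_pos by (simp add: divide_simps) (simp add: algebra_simps)
    finally show "pmf (rank_pmf d m) j *\<^sub>R E j =
        m j * (((s + real d - 1) * ?T j + (s * (real d - 1) + 1) * ?F j) / (real n * (s + 1)))"
      using j by (simp add: pmf_rank_pmf[OF assms(1,2)] mult.commute)
  qed
  finally show ?thesis
    by (simp add: sum_divide_distrib)
qed

lemma image_bool_pairs_eq_image_01_pairs:
  assumes "\<And>j b. j \<in> J \<Longrightarrow> V j b = G j (of_bool b)"
  shows "case_prod V ` (J \<times> UNIV) = (\<lambda>jb. G (fst jb) (snd jb)) ` (J \<times> {0, 1 :: nat})"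
proof (intro equalityI subsetI)
  fix x assume "x \<in> case_prod V ` (J \<times> UNIV)"
  then obtain j b where "j \<in> J" "x = V j b" by auto
  then show "x \<in> (\<lambda>jb. G (fst jb) (snd jb)) ` (J \<times> {0, 1})"
    using assms by (intro image_eqI[where x = "(j, of_bool b)"]) auto
next
  fix x assume "x \<in> (\<lambda>jb. G (fst jb) (snd jb)) ` (J \<times> {0, 1})"
  then obtain j b where "j \<in> J" "b \<in> {0, 1 :: nat}" "x = G j b" by force
  then show "x \<in> case_prod V ` (J \<times> UNIV)"
    using assms by (intro image_eqI[where x = "(j, b = 1)"]) auto
qed

theorem lemma10p1:
  fixes \<epsilon> s c :: real and n d :: nat and w m :: "nat \<Rightarrow> real"
    and J :: "nat set" and K t f :: "nat \<Rightarrow> real" and g :: "nat \<Rightarrow> nat \<Rightarrow> real"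
  assumes eps: "\<epsilon> > 0"
    and n: "n \<ge> 1"
    and s_def: "s = sqrt (exp \<epsilon>)"
    and w_noninc: "\<And>i j. i \<le> j \<Longrightarrow> j < d \<Longrightarrow> w j \<le> w i"
    and m_nonneg: "\<And>j. j < d \<Longrightarrow> m j \<ge> 0"
    and m_sum: "(\<Sum>j<d. m j) = 1"
    and J_def: "J = {j. j < d \<and> m j > 0}"
    and K_def: "\<And>j. j \<in> J \<Longrightarrow> K j = (w j - c) / m j"
    and t_def: "\<And>j. j \<in> J \<Longrightarrow> t j = \<bar>s / (s - 1) * K j + c\<bar>"
    and f_def: "\<And>j. j \<in> J \<Longrightarrow> f j = \<bar>-1 / (s - 1) * K j + c\<bar>"
    and g_def: "\<And>j b. j \<in> J \<Longrightarrow> b \<in> {0, 1} \<Longrightarrow>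
                  g j b = (real b * s - (1 - real b)) / (s - 1) * K j"
  shows "risk_MM \<epsilon> n d w m c = real d / real n * (MAX j\<in>J. max (f j) (t j))
    \<and> (\<forall>\<pi>. is_vote d \<pi> \<longrightarrow> risk_EM \<epsilon> n d w m c \<pi> =
           (\<Sum>j\<in>J. m j * ((s + real d - 1) * t j + (s * (real d - 1) + 1) * f j))
             / (real n * (s + 1)))
    \<and> risk_DD \<epsilon> d w m c =
           real d * ((MAX jb\<in>J \<times> {0, 1}. g (fst jb) (snd jb))
                   - (MIN jb\<in>J \<times> {0, 1}. g (fst jb) (snd jb)))"
proof -
  have finite_J: "finite J" and J_ne: "J \<noteq> {}"
    using weights_support_nonempty[OF m_nonneg m_sum] unfolding J_def by auto
  have T: "\<bar>ws_value s w m c j True\<bar> = t j" and F: "\<bar>ws_value s w m c j False\<bar> = f j"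
    if "j \<in> J" for j
    using that by (simp_all add: ws_value_def t_def f_def K_def)
  have G: "ws_value s w m c j b = g j (of_bool b) + c" if "j \<in> J" for j b
    using that by (cases b) (simp_all add: ws_value_def g_def K_def)
  have coordinate_values:
    "case_prod (ws_value s w m c) ` (J \<times> UNIV) = (\<lambda>jb. g (fst jb) (snd jb) + c) ` (J \<times> {0, 1})"
    using G by (rule image_bool_pairs_eq_image_01_pairs)
  have "finite (J \<times> {0, 1 :: nat})" "J \<times> {0, 1 :: nat} \<noteq> {}"
    using finite_J J_ne by auto
  then have "risk_DD \<epsilon> d w m c = real d * ((MAX jb\<in>J \<times> {0, 1}. g (fst jb) (snd jb))
      - (MIN jb\<in>J \<times> {0, 1}. g (fst jb) (snd jb)))"
    using risk_DD_ws_mech[OF m_nonneg m_sum s_def]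
    by (simp add: J_def[symmetric] coordinate_values Max_add_commute Min_add_commute)
  then show ?thesis
    using risk_MM_ws_mech[OF m_nonneg m_sum s_def] risk_EM_ws_mech[OF m_nonneg m_sum s_def]
    unfolding J_def[symmetric]
    by (simp add: T F max.commute cong: image_cong sum.cong)
qed

end
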